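(* Let $k\ge1$ be an integer. If $k$ is even, then $A(3k,k)$ is nonsingular, i.e. $N(3k,k)=0$. If $k\equiv1\pmod4$ then $N(3k,k)=1$, and if $k\equiv3\pmod4$ then $N(3k,k)=3$.
   Context: For $n>k\ge1$, $A(n,k)$ is the $n\times n$ skew-symmetric Toeplitz matrix whose first $k$ superdiagonals have all entries $1$ and whose remaining superdiagonals have all entries $0$, and $N(n,k)$ is its nullity. *)

theory Defs
  imports "Jordan_Normal_Form.Matrix_Kernel"
begin

definition A_mat :: "nat \<Rightarrow> nat \<Rightarrow> real mat" where
  "A_mat n k = mat n n (\<lambda>(i, j).
      if i < j \<and> j - i \<le> k then 1
      else if j < i \<and> i - j \<le> k then -1
      else 0)"

definition N_null :: "nat \<Rightarrow> nat \<Rightarrow> nat" where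
  "N_null n k = kernel_dim (A_mat n k)"

end

theory Submission
  imports Defs
begin

text \<open>A vector x lies in the kernel of A(n,k) iff its prefix sums
  P(m) = x_0 + ... + x_{m-1} (so P = 0 for m \<le> 0 and P = P(n) for m \<ge> n) satisfy
  P(i+k+1) + P(i-k) = P(i+1) + P(i) for 0 \<le> i < n.  For n = 3k this recurrence can be
  solved block by block: on (0,k], (k,2k] and (2k,3k] the function P is a sum of one, two and
  three consecutive values of a sequence U, and the recurrence holds exactly when U is
  4-periodic and (k+1)-periodic with U(0) = 0, i.e. gcd(4,k+1)-periodic with U(0) = 0.  Such U
  form a space of dimension gcd(4,k+1) - 1, so N(3k,k) = gcd(4,k+1) - 1, which is 0, 1 or 3
  according as k is even, k = 1 or k = 3 (mod 4).\<close>

lemma kernel_dim_eq_pivots: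
  fixes A :: "'a :: field mat"
  assumes A: "A \<in> carrier_mat nr nc"
    and vs: "\<And>i. i < d \<Longrightarrow> vs i \<in> mat_kernel A"
    and ps: "\<And>j. j < d \<Longrightarrow> ps j < nc"
    and delta: "\<And>i j. i < d \<Longrightarrow> j < d \<Longrightarrow> vs i $ ps j = (if i = j then 1 else 0)"
    and uniq: "\<And>x. x \<in> mat_kernel A \<Longrightarrow> (\<And>j. j < d \<Longrightarrow> x $ ps j = 0) \<Longrightarrow> x = 0\<^sub>v nc"
  shows "kernel_dim A = d"
proof -
  interpret K: kernel nr nc A by (unfold_locales, rule A)
  let ?B = "vs ` {..<d}"
  have inj: "inj_on vs {..<d}"
  proof (rule inj_onI)
    fix i j assume ij: "i \<in> {..<d}" "j \<in> {..<d}" and "vs i = vs j"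
    then have "vs i $ ps j = vs j $ ps j" by simp
    with ij delta show "i = j" by (auto split: if_splits)
  qed
  have sub: "?B \<subseteq> mat_kernel A" using vs by auto
  have coord: "K.lincomb a ?B $ ps j = a (vs j)" if j: "j < d" for a j
  proof -
    have "K.lincomb a ?B $ ps j = (\<Sum>w\<in>?B. a w * w $ ps j)"
      by (rule K.lincomb_index[OF ps[OF j] sub])
    also have "\<dots> = (\<Sum>i<d. a (vs i) * vs i $ ps j)"
      by (simp add: sum.reindex[OF inj])
    also have "\<dots> = (\<Sum>i<d. if i = j then a (vs j) else 0)"
      by (rule sum.cong) (auto simp: delta j)
    also have "\<dots> = a (vs j)" using j by simp
    finally show ?thesis .
  qed
  have indpt: "K.lin_indpt ?B"
  proof (rule K.Ker.finite_lin_indpt2[OF _ sub])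
    fix a assume lc: "K.lincomb a ?B = 0\<^sub>v nc"
    show "\<forall>v\<in>?B. a v = 0"
    proof
      fix v assume "v \<in> ?B"
      then obtain j where j: "j < d" and v: "v = vs j" by auto
      show "a v = 0" using coord[OF j, of a] lc ps[OF j] v by simp
    qed
  qed simp
  have spans: "mat_kernel A \<subseteq> K.span ?B"
  proof
    fix x assume x: "x \<in> mat_kernel A"
    define y where "y = K.lincomb (\<lambda>w. x $ ps (the_inv_into {..<d} vs w)) ?B"
    have y_span: "y \<in> K.span ?B" unfolding y_def K.Ker.span_def by blast
    then have "y \<in> mat_kernel A" using K.Ker.span_is_subset2[OF sub] by auto
    then have xy: "x \<in> carrier_vec nc" "y \<in> carrier_vec nc" "A *\<^sub>v x = 0\<^sub>v nr" "A *\<^sub>v y = 0\<^sub>v nr"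
      using mat_kernelD[OF A] x by auto
    have "x - y \<in> mat_kernel A"
      using xy A by (intro mat_kernelI[OF A]) (auto simp: mult_minus_distrib_mat_vec)
    moreover have "(x - y) $ ps j = 0" if j: "j < d" for j
      using xy ps[OF j] coord[OF j] the_inv_into_f_f[OF inj] j by (simp add: y_def)
    ultimately have "x - y = 0\<^sub>v nc" by (rule uniq)
    then have "x = y" using xy by (intro eq_vecI) (auto simp: vec_eq_iff)
    then show "x \<in> K.span ?B" using y_span by simp
  qed
  have "K.basis ?B"
    unfolding K.Ker.basis_def using indpt sub spans K.Ker.span_is_subset2[OF sub] by auto
  then have "K.dim = card ?B" by (intro K.Ker.dim_basis) simp_all
  then show ?thesis using inj by (simp add: card_image)
qed

lemma periodic_shift_int:
  fixes f :: "int \<Rightarrow> 'a"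
  assumes per: "\<And>j. f (j + d) = f j"
  shows "f (j + d * t) = f j"
proof -
  have nonneg: "f (i + d * int n) = f i" for i n
  proof (induction n)
    case (Suc n)
    then show ?case using per[of "i + d * int n"] by (simp add: algebra_simps)
  qed simp
  show ?thesis
  proof (cases "t \<ge> 0")
    case True
    then show ?thesis using nonneg[of j "nat t"] by simp
  next
    case False
    then show ?thesis using nonneg[of "j + d * t" "nat (- t)"] by (simp add: algebra_simps)
  qed
qed

lemma periodic_dvd_int:
  fixes f :: "int \<Rightarrow> 'a"
  assumes "\<And>j. f (j + d) = f j" and "d dvd e"
  shows "f (j + e) = f j"
  using assms(2) periodic_shift_int[of f d, OF assms(1)] by (auto simp: dvd_def)

lemma periodic_gcd_int:
  fixes f :: "int \<Rightarrow> 'a"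
  assumes a: "\<And>j. f (j + a) = f j" and b: "\<And>j. f (j + b) = f j"
  shows "f (j + gcd a b) = f j"
proof -
  obtain u v where uv: "u * a + v * b = gcd a b" using bezout_int by blast
  have "f (j + gcd a b) = f ((j + a * u) + b * v)" using uv by (simp add: algebra_simps)
  also have "\<dots> = f (j + a * u)" by (rule periodic_shift_int[of f b, OF b])
  also have "\<dots> = f j" by (rule periodic_shift_int[of f a, OF a])
  finally show ?thesis .
qed

lemma periodic_mod_int:
  fixes f :: "int \<Rightarrow> 'a"
  assumes "\<And>j. f (j + d) = f j"
  shows "f (a + (j - a) mod d) = f j"
proof -
  have "a + (j - a) mod d + d * ((j - a) div d) = j" by (simp add: mod_mult_div_eq)
  with periodic_shift_int[of f d, OF assms, of "a + (j - a) mod d" "(j - a) div d"] show ?thesis by simp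
qed

lemma periodic_eqI_int:
  fixes f g :: "int \<Rightarrow> 'a"
  assumes "0 < d" and "\<And>j. f (j + d) = f j" and "\<And>j. g (j + d) = g j"
    and "\<And>j. a \<le> j \<Longrightarrow> j < a + d \<Longrightarrow> f j = g j"
  shows "f = g"
proof
  fix j
  have "f j = f (a + (j - a) mod d)" by (rule periodic_mod_int[of f d, OF assms(2), symmetric])
  also have "\<dots> = g (a + (j - a) mod d)" using assms(1,4) by simp
  also have "\<dots> = g j" by (rule periodic_mod_int[of g d, OF assms(3)])
  finally show "f j = g j" .
qed

lemma periodic_extension_int:
  fixes u :: "int \<Rightarrow> 'a"
  assumes d: "0 < d" and per: "\<And>j. a \<le> j \<Longrightarrow> j + d \<le> b \<Longrightarrow> u (j + d) = u j"
    and j: "a \<le> j" "j \<le> b"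
  shows "u j = u (a + (j - a) mod d)"
proof -
  define r where "r = a + (j - a) mod d"
  have r: "a \<le> r" using d by (simp add: r_def)
  have shift: "u (r + d * int t) = u r" if "r + d * int t \<le> b" for t
    using that
  proof (induction t)
    case (Suc t)
    have step: "0 \<le> d * int t" using d by simp
    have "u (r + d * int (Suc t)) = u ((r + d * int t) + d)" by (simp add: algebra_simps)
    also have "\<dots> = u (r + d * int t)"
      using per[of "r + d * int t"] r step Suc.prems by (simp add: algebra_simps)
    also have "\<dots> = u r" using Suc d by (simp add: algebra_simps)
    finally show ?case .
  qed simp
  have "j = r + d * int (nat ((j - a) div d))"
    using d j by (simp add: r_def pos_imp_zdiv_nonneg_iff mod_mult_div_eq)
  then show ?thesis using shift[of "nat ((j - a) div d)"] j by (simp add: r_def)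
qed

lemma period4_window_sum:
  fixes f :: "int \<Rightarrow> 'a :: comm_monoid_add"
  assumes per: "\<And>j. f (j + 4) = f j"
  shows "f (j + 1) + f j + f (j - 1) + f (j - 2) = f 0 + f 1 + f 2 + f 3"
proof -
  define w where "w j = f (j + 1) + f j + f (j - 1) + f (j - 2)" for j
  have "w (j + 1) = w j" for j
    using per[of "j - 2"] unfolding w_def by (simp add: add.commute add.left_commute)
  then have "w (0 + (j - 0) mod 1) = w j" by (rule periodic_mod_int)
  moreover have "w 0 = f 1 + f 0 + f 3 + f 2" using per[of "-1"] per[of "-2"] by (simp add: w_def)
  ultimately show ?thesis by (simp add: w_def add_ac)
qed

definition prefix_sum :: "'a :: comm_monoid_add vec \<Rightarrow> int \<Rightarrow> 'a" where
  "prefix_sum x m = (\<Sum>j | j < dim_vec x \<and> int j < m. x $ j)"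

lemma prefix_sum_nonpos: "m \<le> 0 \<Longrightarrow> prefix_sum x m = 0"
  unfolding prefix_sum_def by (rule sum.neutral) auto

lemma prefix_sum_ge_dim: "int (dim_vec x) \<le> m \<Longrightarrow> prefix_sum x m = prefix_sum x (dim_vec x)"
  unfolding prefix_sum_def by (rule sum.cong) auto

lemma prefix_sum_diff:
  fixes x :: "'a :: ab_group_add vec"
  assumes "a \<le> b"
  shows "prefix_sum x b - prefix_sum x a = (\<Sum>j | j < dim_vec x \<and> a \<le> int j \<and> int j < b. x $ j)"
proof -
  have eq: "{j. j < dim_vec x \<and> a \<le> int j \<and> int j < b}
      = {j. j < dim_vec x \<and> int j < b} - {j. j < dim_vec x \<and> int j < a}"
    using assms by auto
  show ?thesis unfolding prefix_sum_def eq by (rule sum_diff[symmetric]) (use assms in auto)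
qed

lemma vec_nth_eq_prefix_sum_diff:
  fixes x :: "'a :: ab_group_add vec"
  assumes "j < dim_vec x"
  shows "x $ j = prefix_sum x (int j + 1) - prefix_sum x (int j)"
proof -
  have "{i. i < dim_vec x \<and> int i < int j + 1} = insert j {i. i < dim_vec x \<and> int i < int j}"
    using assms by auto
  then show ?thesis unfolding prefix_sum_def by simp
qed

lemma prefix_sum_vec_diff:
  fixes P :: "int \<Rightarrow> 'a :: ab_group_add"
  assumes low: "\<And>m. m \<le> 0 \<Longrightarrow> P m = 0" and high: "\<And>m. int n \<le> m \<Longrightarrow> P m = P n"
  shows "prefix_sum (vec n (\<lambda>j. P (int j + 1) - P (int j))) m = P m"
proof -
  let ?x = "vec n (\<lambda>j. P (int j + 1) - P (int j))"
  have telescope: "prefix_sum ?x (int t) = P (int t)" if "t \<le> n" for t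
  proof -
    have "{j. j < n \<and> int j < int t} = {..<t}" using that by auto
    then have "prefix_sum ?x (int t) = (\<Sum>j<t. P (int (Suc j)) - P (int j))"
      unfolding prefix_sum_def using that by (intro sum.cong) (auto simp: add.commute)
    also have "\<dots> = P (int t)" using low[of 0] sum_lessThan_telescope[of "\<lambda>j. P (int j)" t] by simp
    finally show ?thesis .
  qed
  consider "m \<le> 0" | "0 \<le> m" "m \<le> int n" | "int n < m" by linarith
  then show ?thesis
  proof cases
    case 1
    then show ?thesis using low prefix_sum_nonpos by metis
  next
    case 2
    then show ?thesis using telescope[of "nat m"] by simp
  next
    case 3
    then show ?thesis using prefix_sum_ge_dim[of ?x m] telescope[of n] high[of m] by simp
  qed
qed

lemma A_mat_carrier: "A_mat n k \<in> carrier_mat n n"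
  by (simp add: A_mat_def)

lemma A_mat_mult_vec_nth:
  assumes x: "dim_vec x = n" and i: "i < n"
  shows "(A_mat n k *\<^sub>v x) $ i =
     (prefix_sum x (int i + int k + 1) - prefix_sum x (int i + 1))
     - (prefix_sum x (int i) - prefix_sum x (int i - int k))"
proof -
  let ?after = "{j. j < n \<and> int i + 1 \<le> int j \<and> int j < int i + int k + 1}"
  let ?before = "{j. j < n \<and> int i - int k \<le> int j \<and> int j < int i}"
  have restrict: "(\<Sum>j<n. if j \<in> S then x $ j else 0) = (\<Sum>j\<in>S. x $ j)" if "S \<subseteq> {..<n}" for S
    using that by (simp add: sum.inter_restrict[symmetric] Int_absorb1)
  have "(A_mat n k *\<^sub>v x) $ i = (\<Sum>j<n. A_mat n k $$ (i, j) * x $ j)"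
    using x i unfolding A_mat_def by (simp add: scalar_prod_def atLeast0LessThan)
  also have "\<dots> = (\<Sum>j<n. (if j \<in> ?after then x $ j else 0) - (if j \<in> ?before then x $ j else 0))"
    by (rule sum.cong) (auto simp: A_mat_def i)
  also have "\<dots> = (\<Sum>j\<in>?after. x $ j) - (\<Sum>j\<in>?before. x $ j)"
    unfolding sum_subtractf by (subst (1 2) restrict) auto
  finally show ?thesis
    using x prefix_sum_diff[of "int i + 1" "int i + int k + 1" x]
      prefix_sum_diff[of "int i - int k" "int i" x] by simp
qed

lemma A_mat_kernel_iff:
  assumes x: "x \<in> carrier_vec n"
  shows "x \<in> mat_kernel (A_mat n k) \<longleftrightarrow>
    (\<forall>i<n. prefix_sum x (int i + int k + 1) + prefix_sum x (int i - int k)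
           = prefix_sum x (int i + 1) + prefix_sum x (int i))"
proof -
  have "x \<in> mat_kernel (A_mat n k) \<longleftrightarrow> (\<forall>i<n. (A_mat n k *\<^sub>v x) $ i = 0)"
    using x A_mat_carrier[of n k] by (auto simp: mat_kernel_def vec_eq_iff)
  with x show ?thesis by (simp add: A_mat_mult_vec_nth algebra_simps)
qed

definition admissible :: "int \<Rightarrow> (int \<Rightarrow> real) \<Rightarrow> bool" where
  "admissible K U \<longleftrightarrow> (\<forall>j. U (j + 4) = U j) \<and> (\<forall>j. U (j + K + 1) = U j) \<and> U 0 = 0"

lemma admissible_iff_gcd:
  "admissible K U \<longleftrightarrow> (\<forall>j. U (j + gcd 4 (K + 1)) = U j) \<and> U 0 = 0"
proof
  assume "admissible K U"
  then have "U (j + 4) = U j" "U (j + (K + 1)) = U j" for j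
    unfolding admissible_def by (simp_all add: add.assoc[symmetric])
  then show "(\<forall>j. U (j + gcd 4 (K + 1)) = U j) \<and> U 0 = 0"
    using periodic_gcd_int[of U 4 "K + 1"] \<open>admissible K U\<close> unfolding admissible_def by blast
next
  assume "(\<forall>j. U (j + gcd 4 (K + 1)) = U j) \<and> U 0 = 0"
  then have per: "\<And>j. U (j + gcd 4 (K + 1)) = U j" and "U 0 = 0" by auto
  have "U (j + 4) = U j" "U (j + (K + 1)) = U j" for j
    by (rule periodic_dvd_int[of U, OF per]; simp)+
  then show "admissible K U" using \<open>U 0 = 0\<close> unfolding admissible_def by (simp add: add.assoc)
qed

definition profile :: "int \<Rightarrow> (int \<Rightarrow> real) \<Rightarrow> int \<Rightarrow> real" where
  "profile K U m =
     (if m \<le> 0 then 0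
      else if m \<le> K then U m
      else if m \<le> 2 * K then U (m - K) + U (m - K - 1)
      else if m \<le> 3 * K then U (m - 2 * K) + U (m - 2 * K - 1) + U (m - 2 * K - 2)
      else U K + U (K - 1) + U (K - 2))"

lemma profile_nonpos: "m \<le> 0 \<Longrightarrow> profile K U m = 0"
  unfolding profile_def by simp

lemma profile_first_block: "U 0 = 0 \<Longrightarrow> 0 \<le> m \<Longrightarrow> m \<le> K \<Longrightarrow> profile K U m = U m"
  unfolding profile_def by simp

lemma admissible_wraps:
  assumes "admissible K U"
  shows "U K = U (-1)" and "U (K - 1) = U (-2)" and "U (K - 3) = 0"
proof -
  have per4: "\<And>j. U (j + 4) = U j" and perK: "\<And>j. U (j + K + 1) = U j" and "U 0 = 0"
    using assms unfolding admissible_def by auto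
  then show "U K = U (-1)" "U (K - 1) = U (-2)" "U (K - 3) = 0"
    using perK[of "-1"] perK[of "-2"] perK[of "-4"] per4[of "-4"] by (simp_all add: algebra_simps)
qed

lemma profile_second_block:
  assumes U: "admissible K U" and m: "K \<le> m" "m \<le> 2 * K"
  shows "profile K U m = U (m - K) + U (m - K - 1)"
proof -
  have "U 0 = 0" using U unfolding admissible_def by simp
  then show ?thesis using m admissible_wraps(1)[OF U] unfolding profile_def by auto
qed

lemma profile_third_block:
  assumes U: "admissible K U" and m: "2 * K \<le> m" "m \<le> 3 * K"
  shows "profile K U m = U (m - 2 * K) + U (m - 2 * K - 1) + U (m - 2 * K - 2)"
proof -
  have "U 0 = 0" using U unfolding admissible_def by simp
  then show ?thesis using m admissible_wraps(1,2)[OF U] unfolding profile_def by auto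
qed

lemma profile_tail: "1 \<le> K \<Longrightarrow> 3 * K \<le> m \<Longrightarrow> profile K U m = U K + U (K - 1) + U (K - 2)"
  unfolding profile_def by simp

lemma profile_recurrence:
  assumes K: "1 \<le> K" and U: "admissible K U" and i: "0 \<le> i" "i < 3 * K"
  shows "profile K U (i + K + 1) + profile K U (i - K) = profile K U (i + 1) + profile K U i"
proof -
  have U0: "U 0 = 0" using U unfolding admissible_def by simp
  consider "i < K" | "K \<le> i" "i < 2 * K" | "2 * K \<le> i" using i by linarith
  then show ?thesis
  proof cases
    case 1
    then show ?thesis
      using i U0 profile_second_block[OF U, of "i + K + 1"] profile_nonpos[of "i - K"]
        profile_first_block[of U "i + 1" K] profile_first_block[of U i K] by simp
  next
    case 2
    then show ?thesis
      using i U0 profile_third_block[OF U, of "i + K + 1"] profile_first_block[of U "i - K" K]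
        profile_second_block[OF U, of "i + 1"] profile_second_block[OF U, of i] by simp
  next
    case 3
    have per4: "\<And>j. U (j + 4) = U j" using U unfolding admissible_def by simp
    have "U (i - 2 * K + 1) + U (i - 2 * K) + U (i - 2 * K - 1) + U (i - 2 * K - 2)
        = U K + U (K - 1) + U (K - 2) + U (K - 3)"
      using period4_window_sum[of U, OF per4, of "i - 2 * K"]
        period4_window_sum[of U, OF per4, of "K - 1"] by (simp add: algebra_simps)
    then show ?thesis
      using 3 i K admissible_wraps(3)[OF U] profile_tail[OF K, of "i + K + 1" U]
        profile_second_block[OF U, of "i - K"] profile_third_block[OF U, of "i + 1"]
        profile_third_block[OF U, of i] by (simp add: algebra_simps)
  qed
qed

lemma recurrence_blocks:
  fixes P u :: "int \<Rightarrow> real"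
  assumes K: "1 \<le> K"
    and low: "\<And>m. m \<le> 0 \<Longrightarrow> P m = 0"
    and high: "\<And>m. 3 * K \<le> m \<Longrightarrow> P m = P (3 * K)"
    and rec: "\<And>i. 0 \<le> i \<Longrightarrow> i < 3 * K \<Longrightarrow> P (i + K + 1) + P (i - K) = P (i + 1) + P i"
    and u: "\<And>j. 0 \<le> j \<Longrightarrow> u j = P j" "u (-1) = P K" "u (-2) = P (K - 1)"
  shows "\<And>m. 0 \<le> m \<Longrightarrow> m \<le> K \<Longrightarrow> P (K + m) = u m + u (m - 1)"
    and "\<And>m. 0 \<le> m \<Longrightarrow> m \<le> K \<Longrightarrow> P (2 * K + m) = u m + u (m - 1) + u (m - 2)"
    and "\<And>m. 0 \<le> m \<Longrightarrow> m < K \<Longrightarrow> u (m + 1) + u m + u (m - 1) + u (m - 2) = P (3 * K)"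
proof -
  have u0: "u 0 = 0" using u(1)[of 0] low[of 0] by simp
  show block2: "P (K + m) = u m + u (m - 1)" if m: "0 \<le> m" "m \<le> K" for m
  proof (cases "m = 0")
    case True
    then show ?thesis using u0 u(2) by simp
  next
    case False
    then show ?thesis
      using rec[of "m - 1"] low[of "m - 1 - K"] u(1)[of m] u(1)[of "m - 1"] m K
      by (simp add: algebra_simps)
  qed
  show block3: "P (2 * K + m) = u m + u (m - 1) + u (m - 2)" if m: "0 \<le> m" "m \<le> K" for m
  proof (cases "m = 0")
    case True
    then show ?thesis
      using rec[of "K - 1"] low[of "-1"] u0 u(2,3) K by (simp add: algebra_simps)
  next
    case False
    then show ?thesis
      using rec[of "K + m - 1"] block2[of "m - 1"] block2[of m] u(1)[of "m - 1"] m K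
      by (simp add: algebra_simps)
  qed
  show "u (m + 1) + u m + u (m - 1) + u (m - 2) = P (3 * K)" if m: "0 \<le> m" "m < K" for m
    using rec[of "2 * K + m"] high[of "3 * K + m + 1"] block2[of m] block3[of "m + 1"] block3[of m] m K
    by (simp add: algebra_simps)
qed

lemma recurrence_solution_is_profile:
  fixes P :: "int \<Rightarrow> real"
  assumes K: "1 \<le> K"
    and low: "\<And>m. m \<le> 0 \<Longrightarrow> P m = 0"
    and high: "\<And>m. 3 * K \<le> m \<Longrightarrow> P m = P (3 * K)"
    and rec: "\<And>i. 0 \<le> i \<Longrightarrow> i < 3 * K \<Longrightarrow> P (i + K + 1) + P (i - K) = P (i + 1) + P i"
  obtains U where "admissible K U" and "P = profile K U"
proof -
  \<comment> \<open>u(-1) and u(-2) are chosen so that the block formulas hold down to m = 0\<close>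
  define u where "u j = (if j = -1 then P K else if j = -2 then P (K - 1) else P j)" for j
  have u: "\<And>j. 0 \<le> j \<Longrightarrow> u j = P j" "u (-1) = P K" "u (-2) = P (K - 1)"
    by (simp_all add: u_def)
  note blocks = recurrence_blocks[OF K low high rec u]
  define U where "U j = u (-2 + (j + 2) mod 4)" for j
  have per4: "U (j + 4) = U j" for j
  proof -
    have "(j + 4 + 2) mod 4 = (j + 2) mod 4" by presburger
    then show ?thesis by (simp add: U_def)
  qed
  have u_U: "u j = U j" if "-2 \<le> j" "j \<le> K" for j
  proof -
    have "u (j + 4) = u j" if "-2 \<le> j" "j + 4 \<le> K" for j
      using blocks(3)[of "j + 2"] blocks(3)[of "j + 3"] that by (simp add: algebra_simps)
    then show ?thesis
      using periodic_extension_int[of 4 "-2" K u j] that by (simp add: U_def)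
  qed
  have U0: "U 0 = 0" using u_U[of 0] u(1)[of 0] low[of 0] K by simp
  have ends: "U K = U (-1)" "U (K - 1) = U (-2)"
    using u_U[of K] u_U[of "K - 1"] u_U[of "-1"] u_U[of "-2"] u(1)[of K] u(1)[of "K - 1"] u(2,3) K
    by simp_all
  have "U (K - 2) = U 1"
    using blocks(3)[of 0] blocks(2)[of K] ends u_U[of "K - 2"] u_U[of 1] u_U[of 0] u_U[of "-1"]
      u_U[of "-2"] u_U[of K] u_U[of "K - 1"] U0 K by (simp add: algebra_simps)
  moreover have "U (K - 3) = U 0"
    using period4_window_sum[of U, OF per4, of "K - 1"] period4_window_sum[of U, OF per4, of 0]
      \<open>U (K - 2) = U 1\<close> ends by (simp add: algebra_simps)
  ultimately have wraps: "U (-2 + K + 1) = U (-2)" "U (-1 + K + 1) = U (-1)"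
      "U (0 + K + 1) = U 0" "U (1 + K + 1) = U 1"
    using ends per4[of "K - 3"] per4[of "K - 2"] by (simp_all add: algebra_simps)
  have "(\<lambda>j. U (j + K + 1)) = U"
  proof (rule periodic_eqI_int[of 4 _ _ "-2"])
    show "U (j + 4 + K + 1) = U (j + K + 1)" for j using per4[of "j + K + 1"] by (simp add: ac_simps)
    fix j :: int assume "-2 \<le> j" "j < -2 + 4"
    then have "j \<in> {-2, -1, 0, 1}" by auto
    then show "U (j + K + 1) = U j" using wraps by auto
  qed (simp_all add: per4)
  then have perK: "U (j + K + 1) = U j" for j by metis
  have "admissible K U" using per4 perK U0 unfolding admissible_def by blast
  moreover have "P m = profile K U m" for m
  proof -
    consider "m \<le> 0" | "0 \<le> m" "m \<le> K" | "K \<le> m" "m \<le> 2 * K" | "2 * K \<le> m" "m \<le> 3 * K" | "3 * K \<le> m"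
      by linarith
    then show ?thesis
    proof cases
      case 1
      then show ?thesis using low profile_nonpos by metis
    next
      case 2
      then show ?thesis using u(1)[of m] u_U[of m] U0 profile_first_block[of U m K] by simp
    next
      case 3
      then show ?thesis
        using blocks(1)[of "m - K"] u_U[of "m - K"] u_U[of "m - K - 1"]
          profile_second_block[OF \<open>admissible K U\<close>, of m] by simp
    next
      case 4
      then show ?thesis
        using blocks(2)[of "m - 2 * K"] u_U[of "m - 2 * K"] u_U[of "m - 2 * K - 1"] u_U[of "m - 2 * K - 2"]
          profile_third_block[OF \<open>admissible K U\<close>, of m] by simp
    next
      case 5
      then show ?thesis
        using high[of m] blocks(2)[of K] u_U[of K] u_U[of "K - 1"] u_U[of "K - 2"] K
          profile_tail[OF K, of m U] by simp
    qed
  qed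
  ultimately show ?thesis using that by blast
qed

definition profile_vec :: "nat \<Rightarrow> (int \<Rightarrow> real) \<Rightarrow> real vec" where
  "profile_vec k U = vec (3 * k) (\<lambda>j. profile (int k) U (int j + 1) - profile (int k) U (int j))"

lemma prefix_sum_profile_vec:
  assumes "1 \<le> k"
  shows "prefix_sum (profile_vec k U) m = profile (int k) U m"
  unfolding profile_vec_def
proof (rule prefix_sum_vec_diff)
  show "profile (int k) U m = profile (int k) U (int (3 * k))" if "int (3 * k) \<le> m" for m
    using that assms profile_tail[of "int k" m U] profile_tail[of "int k" "3 * int k" U] by simp
qed (rule profile_nonpos)

lemma profile_vec_in_kernel:
  assumes k: "1 \<le> k" and U: "admissible (int k) U"
  shows "profile_vec k U \<in> mat_kernel (A_mat (3 * k) k)"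
proof -
  have "profile_vec k U \<in> carrier_vec (3 * k)" by (simp add: profile_vec_def)
  moreover have "profile (int k) U (int i + int k + 1) + profile (int k) U (int i - int k)
      = profile (int k) U (int i + 1) + profile (int k) U (int i)" if "i < 3 * k" for i
    using profile_recurrence[of "int k" U "int i"] k U that by simp
  ultimately show ?thesis by (simp add: A_mat_kernel_iff prefix_sum_profile_vec k)
qed

lemma kernel_vec_eq_profile_vec:
  assumes k: "1 \<le> k" and x: "x \<in> mat_kernel (A_mat (3 * k) k)"
  obtains U where "admissible (int k) U" and "x = profile_vec k U"
proof -
  have xc: "x \<in> carrier_vec (3 * k)" using mat_kernelD[OF A_mat_carrier x] by blast
  let ?P = "prefix_sum x"
  have rows: "\<forall>i<3 * k. ?P (int i + int k + 1) + ?P (int i - int k) = ?P (int i + 1) + ?P (int i)"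
    using x A_mat_kernel_iff[OF xc, of k] by simp
  obtain U where U: "admissible (int k) U" and P: "?P = profile (int k) U"
  proof (rule recurrence_solution_is_profile[of "int k" ?P])
    show "1 \<le> int k" using k by simp
    show "?P m = 0" if "m \<le> 0" for m using that by (rule prefix_sum_nonpos)
    show "?P m = ?P (3 * int k)" if "3 * int k \<le> m" for m
      using xc that prefix_sum_ge_dim[of x m] by simp
    show "?P (i + int k + 1) + ?P (i - int k) = ?P (i + 1) + ?P i" if "0 \<le> i" "i < 3 * int k" for i
      using rows[rule_format, of "nat i"] that by simp
  qed
  have "x = profile_vec k U"
  proof (rule eq_vecI)
    show "dim_vec x = dim_vec (profile_vec k U)" using xc by (simp add: profile_vec_def)
    fix j assume "j < dim_vec (profile_vec k U)"
    then have j: "j < dim_vec x" using xc by (simp add: profile_vec_def)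
    then show "x $ j = profile_vec k U $ j"
      unfolding vec_nth_eq_prefix_sum_diff[OF j] P using xc by (simp add: profile_vec_def)
  qed
  with U that show ?thesis by blast
qed

lemma profile_vec_zero: "profile_vec k (\<lambda>_. 0) = 0\<^sub>v (3 * k)"
proof -
  have "profile K (\<lambda>_. 0) m = 0" for K m by (simp add: profile_def)
  then show ?thesis by (intro eq_vecI) (simp_all add: profile_vec_def)
qed

lemma profile_vec_nth_first_block:
  "U 0 = 0 \<Longrightarrow> j < k \<Longrightarrow> profile_vec k U $ j = U (int j + 1) - U (int j)"
  by (simp add: profile_vec_def profile_first_block)

lemma admissible_eq_zero:
  assumes U: "admissible K U"
    and flat: "\<And>c. int c + 1 < gcd 4 (K + 1) \<Longrightarrow> U (int c + 1) = U (int c)"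
  shows "U = (\<lambda>_. 0)"
proof -
  let ?g = "gcd 4 (K + 1)"
  have per: "\<And>j. U (j + ?g) = U j" and U0: "U 0 = 0" using U by (auto simp: admissible_iff_gcd)
  have zero_below: "U (int c) = 0" if "int c < ?g" for c
    using that
  proof (induction c)
    case (Suc c)
    then show ?case using flat[of c] by (simp add: add.commute)
  qed (simp add: U0)
  show ?thesis
  proof (rule periodic_eqI_int[of ?g U _ 0])
    fix j :: int assume "0 \<le> j" "j < 0 + ?g"
    then show "U j = 0" using zero_below[of "nat j"] by simp
  qed (simp_all add: per)
qed

theorem N_null_3k_eq_gcd:
  assumes k: "1 \<le> k"
  shows "N_null (3 * k) k = nat (gcd 4 (int k + 1)) - 1"
proof -
  define g where "g = gcd 4 (int k + 1)"
  \<comment> \<open>step functions whose increments on [0, g - 1) are unit vectors\<close>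
  define V where "V c j = (if int c < j mod g then 1 else 0 :: real)" for c j
  have g: "0 < g" "g \<le> int k + 1" unfolding g_def using zdvd_imp_le[of "gcd 4 (int k + 1)" "int k + 1"] by auto
  have V: "admissible (int k) (V c)" for c
    by (simp add: admissible_iff_gcd V_def g_def[symmetric])
  show ?thesis
    unfolding N_null_def g_def[symmetric]
  proof (rule kernel_dim_eq_pivots[where vs = "\<lambda>c. profile_vec k (V c)" and ps = "\<lambda>c. c"])
    show "A_mat (3 * k) k \<in> carrier_mat (3 * k) (3 * k)" by (rule A_mat_carrier)
    show "profile_vec k (V c) \<in> mat_kernel (A_mat (3 * k) k)" for c by (rule profile_vec_in_kernel[OF k V])
    show "j < 3 * k" if "j < nat g - 1" for j using that g by linarith
    show "profile_vec k (V i) $ j = (if i = j then 1 else 0)" if "i < nat g - 1" "j < nat g - 1" for i j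
      using that g V[of i] profile_vec_nth_first_block[of "V i" j k]
      by (auto simp: admissible_def V_def)
  next
    fix x assume x: "x \<in> mat_kernel (A_mat (3 * k) k)" and pivots: "\<And>j. j < nat g - 1 \<Longrightarrow> x $ j = 0"
    obtain U where U: "admissible (int k) U" and xU: "x = profile_vec k U"
      using kernel_vec_eq_profile_vec[OF k x] .
    have "U = (\<lambda>_. 0)"
    proof (rule admissible_eq_zero[OF U])
      fix c :: nat assume "int c + 1 < gcd 4 (int k + 1)"
      then have "c < nat g - 1" "c < k" using g unfolding g_def by linarith+
      then show "U (int c + 1) = U (int c)"
        using pivots[of c] U profile_vec_nth_first_block[of U c k] by (simp add: xU admissible_def)
    qed
    then show "x = 0\<^sub>v (3 * k)" by (simp add: xU profile_vec_zero)
  qed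
qed

theorem theorem8p9:
  fixes k :: nat
  assumes "k \<ge> 1"
  shows "(even k \<longrightarrow> N_null (3 * k) k = 0)
       \<and> (k mod 4 = 1 \<longrightarrow> N_null (3 * k) k = 1)
       \<and> (k mod 4 = 3 \<longrightarrow> N_null (3 * k) k = 3)"
proof -
  have "N_null (3 * k) k = nat (gcd 4 (int k + 1)) - 1" by (rule N_null_3k_eq_gcd[OF assms])
  also have "gcd 4 (int k + 1) = gcd 4 ((int k + 1) mod 4)" by (rule gcd_mod_right[symmetric]) simp
  also have "(int k + 1) mod 4 = int ((k mod 4 + 1) mod 4)" by presburger
  finally have N: "N_null (3 * k) k = nat (gcd 4 (int ((k mod 4 + 1) mod 4))) - 1" .
  have gcds: "gcd (4::int) 1 = 1" "gcd (4::int) 2 = 2" "gcd (4::int) 3 = 1"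
    by (simp_all add: gcd_red_int[of 4 3])
  show ?thesis
  proof (intro conjI impI)
    assume "even k"
    then have "k mod 4 = 0 \<or> k mod 4 = 2" by presburger
    then show "N_null (3 * k) k = 0" by (elim disjE) (simp_all add: N gcds)
  next
    assume "k mod 4 = 1"
    then show "N_null (3 * k) k = 1" by (simp add: N gcds)
  next
    assume "k mod 4 = 3"
    then show "N_null (3 * k) k = 3" by (simp add: N)
  qed
qed

end
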